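(* Consider two CDNs with performance parameters $0\le\beta_1<\beta_2<1$ and prices $w_1,w_2\ge0$ such that each CDN attracts a set of content providers of positive measure (model in the context). Then there exist $\theta_1,\theta_2$ such that for a content provider with sensitivity $\theta\in[0,1]$: if $0\le\theta\le\theta_2$ then $0\ge U(\theta,2)$ and $0\ge U(\theta,1)$ (choosing no CDN is best); if $\theta_2\le\theta\le\theta_1$ then $U(\theta,2)\ge U(\theta,1)$ and $U(\theta,2)\ge0$ (choosing $CDN_2$ is best); if $\theta_1\le\theta\le1$ then $U(\theta,1)\ge U(\theta,2)$ and $U(\theta,1)\ge0$ (choosing $CDN_1$ is best).
   Context: Each $CDN_k$ ($k=1,2$) has a fixed performance parameter $\beta_k\in[0,1)$ and price $w_k\ge0$. There is a continuum of content providers of total mass $\Lambda>0$ with sensitivity parameters $\theta$ uniformly distributed on $[0,1]$. A content provider with sensitivity $\theta$ hiring $CDN_k$ gets payoff $U(\theta,k)=\theta(1-\beta_k)-w_k$; hiring none gives $0$. Each content provider hires at most one CDN, choosing an option of maximum payoff. *)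

theory Defs
  imports "HOL-Analysis.Analysis"
begin

definition U :: "(nat \<Rightarrow> real) \<Rightarrow> (nat \<Rightarrow> real) \<Rightarrow> real \<Rightarrow> nat \<Rightarrow> real" where
  "U beta w theta k = theta * (1 - beta k) - w k"

definition attracted :: "(nat \<Rightarrow> real) \<Rightarrow> (nat \<Rightarrow> real) \<Rightarrow> nat \<Rightarrow> nat \<Rightarrow> real set" where
  "attracted beta w k j =
     {theta \<in> {0..1}. U beta w theta k \<ge> 0 \<and> U beta w theta k \<ge> U beta w theta j}"

end

theory Submission
  imports Defs
begin

(* Each payoff is affine in theta, and the slopes satisfy 1 - beta 1 > 1 - beta 2 > 0.
   Hence CDN 2 beats hiring nobody exactly above its entry threshold w 2 / (1 - beta 2),
   and CDN 1 beats CDN 2 exactly above the point where the two payoff lines cross.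
   That each CDN attracts a set of positive measure forces these two thresholds
   into the order 0 <= theta2 <= theta1 <= 1. *)

definition entry_threshold :: "(nat \<Rightarrow> real) \<Rightarrow> (nat \<Rightarrow> real) \<Rightarrow> nat \<Rightarrow> real" where
  "entry_threshold beta w k = w k / (1 - beta k)"

definition indifference_point :: "(nat \<Rightarrow> real) \<Rightarrow> (nat \<Rightarrow> real) \<Rightarrow> nat \<Rightarrow> nat \<Rightarrow> real" where
  "indifference_point beta w k j = (w k - w j) / (beta j - beta k)"

lemma entry_threshold_nonneg:
  "w k \<ge> 0 \<Longrightarrow> beta k < 1 \<Longrightarrow> entry_threshold beta w k \<ge> 0"
  unfolding entry_threshold_def by simp

lemma U_nonneg_iff_entry_threshold_le:
  assumes "beta k < 1"
  shows "U beta w theta k \<ge> 0 \<longleftrightarrow> entry_threshold beta w k \<le> theta"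
  using assms unfolding U_def entry_threshold_def by (simp add: field_simps)

lemma U_nonpos_iff_le_entry_threshold:
  assumes "beta k < 1"
  shows "U beta w theta k \<le> 0 \<longleftrightarrow> theta \<le> entry_threshold beta w k"
  using assms unfolding U_def entry_threshold_def by (simp add: field_simps)

lemma U_le_U_iff_indifference_point_le:
  assumes "beta k < beta j"
  shows "U beta w theta j \<le> U beta w theta k \<longleftrightarrow> indifference_point beta w k j \<le> theta"
  using assms unfolding U_def indifference_point_def by (simp add: field_simps)

lemma U_le_U_iff_le_indifference_point:
  assumes "beta j < beta k"
  shows "U beta w theta j \<le> U beta w theta k \<longleftrightarrow> theta \<le> indifference_point beta w j k"
  using assms unfolding U_def indifference_point_def by (simp add: field_simps)

lemma indifference_point_le_one_if_attracted:
  assumes "beta k < beta j" and "attracted beta w k j \<noteq> {}"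
  shows "indifference_point beta w k j \<le> 1"
  using assms U_le_U_iff_indifference_point_le[of beta k j w]
  unfolding attracted_def by force

lemma entry_threshold_le_indifference_point_if_attracted:
  assumes "beta j < beta k" and "beta k < 1" and "attracted beta w k j \<noteq> {}"
  shows "entry_threshold beta w k \<le> indifference_point beta w j k"
  using assms U_le_U_iff_le_indifference_point[of beta j k w]
    U_nonneg_iff_entry_threshold_le[of beta k w]
  unfolding attracted_def by force

theorem lemma2:
  fixes beta w :: "nat \<Rightarrow> real" and Lambda :: real
  assumes "Lambda > 0"
    and "0 \<le> beta 1" and "beta 1 < beta 2" and "beta 2 < 1"
    and "w 1 \<ge> 0" and "w 2 \<ge> 0"
    and "emeasure lborel (attracted beta w 1 2) > 0"
    and "emeasure lborel (attracted beta w 2 1) > 0"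
  shows "\<exists>theta1 theta2. 0 \<le> theta2 \<and> theta2 \<le> theta1 \<and> theta1 \<le> 1 \<and>
    (\<forall>theta \<in> {0..1}.
      (theta \<le> theta2 \<longrightarrow> 0 \<ge> U beta w theta 2 \<and> 0 \<ge> U beta w theta 1) \<and>
      (theta2 \<le> theta \<and> theta \<le> theta1 \<longrightarrow>
         U beta w theta 2 \<ge> U beta w theta 1 \<and> U beta w theta 2 \<ge> 0) \<and>
      (theta1 \<le> theta \<longrightarrow>
         U beta w theta 1 \<ge> U beta w theta 2 \<and> U beta w theta 1 \<ge> 0))"
proof -
  define theta1 where "theta1 = indifference_point beta w 1 2"
  define theta2 where "theta2 = entry_threshold beta w 2"
  have theta2_nonneg: "0 \<le> theta2"
    unfolding theta2_def using assms(6,4) by (rule entry_threshold_nonneg)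
  have attracted_nonempty: "attracted beta w 1 2 \<noteq> {}" "attracted beta w 2 1 \<noteq> {}"
    using assms(7,8) by auto
  have theta2_le_theta1: "theta2 \<le> theta1"
    unfolding theta1_def theta2_def using assms(3,4) attracted_nonempty(2)
    by (rule entry_threshold_le_indifference_point_if_attracted)
  have theta1_le_one: "theta1 \<le> 1"
    unfolding theta1_def using assms(3) attracted_nonempty(1)
    by (rule indifference_point_le_one_if_attracted)
  have U2_le_U1: "theta1 \<le> theta \<Longrightarrow> U beta w theta 2 \<le> U beta w theta 1"
    and U1_le_U2: "theta \<le> theta1 \<Longrightarrow> U beta w theta 1 \<le> U beta w theta 2"
    and U2_nonneg: "theta2 \<le> theta \<Longrightarrow> U beta w theta 2 \<ge> 0"
    and U2_nonpos: "theta \<le> theta2 \<Longrightarrow> U beta w theta 2 \<le> 0" for theta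
    unfolding theta1_def theta2_def using assms(3,4)
    by (simp_all add: U_le_U_iff_indifference_point_le U_le_U_iff_le_indifference_point
        U_nonneg_iff_entry_threshold_le U_nonpos_iff_le_entry_threshold)
  have U1_nonpos: "U beta w theta 1 \<le> 0" if "theta \<le> theta2" for theta
    using U1_le_U2[of theta] U2_nonpos[of theta] that theta2_le_theta1 by linarith
  have U1_nonneg: "U beta w theta 1 \<ge> 0" if "theta1 \<le> theta" for theta
    using U2_le_U1[of theta] U2_nonneg[of theta] that theta2_le_theta1 by linarith
  show ?thesis
    using theta2_nonneg theta2_le_theta1 theta1_le_one
      U2_le_U1 U1_le_U2 U2_nonneg U2_nonpos U1_nonpos U1_nonneg
    by blast
qed

end
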